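(* For each gadget $G\in\{A,B\}$, let $R_G=J_1^GJ_0^G$ and let $\mu_G$ be its dominant eigenvalue (numerically $\mu_A\approx 0.0944920594891271$, $\mu_B\approx0.2038817328642625$). Let $v_0^G$ be a corresponding eigenvector normalized so that its first entry (its $p$-component) equals $1$, and set $v_1^G=DS_G\,v_0^G$. Then, with $c_G:=\sqrt{\mu_G}>0$, $$J_0^Gv_0^G=c_Gv_1^G,\qquad J_1^Gv_1^G=c_Gv_0^G.$$
   Context: Let $$L_A=\begin{pmatrix}1&1&-1&-1\\-1&1&1&1\\1&-1&-1&1\\1&-1&1&-1\end{pmatrix},\qquad L_B=\begin{pmatrix}1&1&-1&-1\\-1&1&1&1\\1&-1&-1&1\\1&-1&1&-1\\1&-1&1&1\end{pmatrix}.$$ For a sign matrix $L$ and a distribution $u$ on its rows, the one-step AdaBoost update using column $j$ is $u'_i=u_i/(1+\mu L_{ij})$ with $\mu=(u^\top L)_j$. Chart coordinates: $(p,d)$ corresponds to $(p-\tfrac12,1-p,\tfrac12-d,d)$ on the rows of $L_A$, and $(p,d,e)$ to $(p-\tfrac12,1-p,\tfrac12-d-e,d,e)$ on the rows of $L_B$. For $G\in\{A,B\}$, $F_0^G$ (resp. $F_1^G$) is the rational map in chart coordinates obtained by composing the five one-step updates on $L_G$ with columns $1,3,4,1,2$ (resp. $1,4,3,1,2$). Let $p_*$ be the unique root of $f(p)=1024p^7-3072p^6+3200p^5-1152p^4-144p^3+176p^2-40p+7$ in $[0.637116837818846,\,0.637116837818848]$, and $d_*=512p_*^6-1152p_*^5+736p_*^4-24p_*^3-88p_*^2+19p_*-\tfrac92\approx0.25799538$.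 Set $\hat P_0^A=(p_*,d_* )$, $\hat P_1^A=(p_*,\tfrac12-d_* )$, $\hat P_0^B=(p_*,d_*,0)$, $\hat P_1^B=(p_*,\tfrac12-d_*,0)$ (then $F_0^G(\hat P_0^G)=\hat P_1^G$ and $F_1^G(\hat P_1^G)=\hat P_0^G$). Let $J_i^G=DF_i^G(\hat P_i^G)$ be the Jacobian matrices. Let $DS_A=\begin{pmatrix}1&0\\0&-1\end{pmatrix}$ and $DS_B=\begin{pmatrix}1&0&0\\0&-1&-1\\0&0&1\end{pmatrix}$ (the differentials of the phase-swap involutions $S_A(p,d)=(p,\tfrac12-d)$, $S_B(p,d,e)=(p,\tfrac12-d-e,e)$). *)

theory Defs
  imports "HOL-Analysis.Analysis"
begin

text \<open>Sign matrices, rows and columns indexed from 1 (as in the paper).\<close>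

definition LA :: "nat \<Rightarrow> nat \<Rightarrow> real" where
  "LA i j = ([[1,1,-1,-1],[-1,1,1,1],[1,-1,-1,1],[1,-1,1,-1]] :: real list list) ! (i - 1) ! (j - 1)"

definition LB :: "nat \<Rightarrow> nat \<Rightarrow> real" where
  "LB i j = ([[1,1,-1,-1],[-1,1,1,1],[1,-1,-1,1],[1,-1,1,-1],[1,-1,1,1]] :: real list list) ! (i - 1) ! (j - 1)"

definition ada_step :: "(nat \<Rightarrow> nat \<Rightarrow> real) \<Rightarrow> nat \<Rightarrow> nat \<Rightarrow> (nat \<Rightarrow> real) \<Rightarrow> (nat \<Rightarrow> real)" where
  "ada_step L m j u = (let mu = (\<Sum>i\<in>{1..m}. u i * L i j) in (\<lambda>i. u i / (1 + mu * L i j)))"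

definition ada_run :: "(nat \<Rightarrow> nat \<Rightarrow> real) \<Rightarrow> nat \<Rightarrow> nat list \<Rightarrow> (nat \<Rightarrow> real) \<Rightarrow> (nat \<Rightarrow> real)" where
  "ada_run L m cs u = fold (ada_step L m) cs u"

definition chartA :: "real^2 \<Rightarrow> (nat \<Rightarrow> real)" where
  "chartA x = (\<lambda>i. if i = 1 then x$1 - 1/2 else if i = 2 then 1 - x$1
                   else if i = 3 then 1/2 - x$2 else if i = 4 then x$2 else 0)"

definition unchartA :: "(nat \<Rightarrow> real) \<Rightarrow> real^2" where
  "unchartA u = vector [1 - u 2, u 4]"

definition chartB :: "real^3 \<Rightarrow> (nat \<Rightarrow> real)" where
  "chartB x = (\<lambda>i. if i = 1 then x$1 - 1/2 else if i = 2 then 1 - x$1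
                   else if i = 3 then 1/2 - x$2 - x$3 else if i = 4 then x$2
                   else if i = 5 then x$3 else 0)"

definition unchartB :: "(nat \<Rightarrow> real) \<Rightarrow> real^3" where
  "unchartB u = vector [1 - u 2, u 4, u 5]"

definition F0A :: "real^2 \<Rightarrow> real^2" where "F0A x = unchartA (ada_run LA 4 [1,3,4,1,2] (chartA x))"
definition F1A :: "real^2 \<Rightarrow> real^2" where "F1A x = unchartA (ada_run LA 4 [1,4,3,1,2] (chartA x))"
definition F0B :: "real^3 \<Rightarrow> real^3" where "F0B x = unchartB (ada_run LB 5 [1,3,4,1,2] (chartB x))"
definition F1B :: "real^3 \<Rightarrow> real^3" where "F1B x = unchartB (ada_run LB 5 [1,4,3,1,2] (chartB x))"

definition fpoly :: "real \<Rightarrow> real" where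
  "fpoly p = 1024*p^7 - 3072*p^6 + 3200*p^5 - 1152*p^4 - 144*p^3 + 176*p^2 - 40*p + 7"

definition p_star :: real where
  "p_star = (THE p. p \<in> {0.637116837818846..0.637116837818848} \<and> fpoly p = 0)"

definition d_star :: real where
  "d_star = 512*p_star^6 - 1152*p_star^5 + 736*p_star^4 - 24*p_star^3 - 88*p_star^2 + 19*p_star - 9/2"

definition P0A :: "real^2" where "P0A = vector [p_star, d_star]"
definition P1A :: "real^2" where "P1A = vector [p_star, 1/2 - d_star]"
definition P0B :: "real^3" where "P0B = vector [p_star, d_star, 0]"
definition P1B :: "real^3" where "P1B = vector [p_star, 1/2 - d_star, 0]"

definition jacobian :: "(real^'n \<Rightarrow> real^'m) \<Rightarrow> real^'n \<Rightarrow> real^'n^'m" where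
  "jacobian F P = matrix (frechet_derivative F (at P))"

definition J0A :: "real^2^2" where "J0A = jacobian F0A P0A"
definition J1A :: "real^2^2" where "J1A = jacobian F1A P1A"
definition J0B :: "real^3^3" where "J0B = jacobian F0B P0B"
definition J1B :: "real^3^3" where "J1B = jacobian F1B P1B"

definition DSA :: "real^2^2" where "DSA = vector [vector [1, 0], vector [0, -1]]"
definition DSB :: "real^3^3" where
  "DSB = vector [vector [1, 0, 0], vector [0, -1, -1], vector [0, 0, 1]]"

definition complex_eigenvalue :: "real^'n^'n \<Rightarrow> complex \<Rightarrow> bool" where
  "complex_eigenvalue R l \<longleftrightarrow>
     (\<exists>w :: complex^'n. w \<noteq> 0 \<and> (\<chi> i j. complex_of_real (R$i$j)) *v w = l *s w)"

definition dominant_eigenvalue :: "real^'n^'n \<Rightarrow> real \<Rightarrow> bool" where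
  "dominant_eigenvalue R mu \<longleftrightarrow>
     (\<exists>v. v \<noteq> 0 \<and> R *v v = mu *s v) \<and>
     (\<forall>l. complex_eigenvalue R l \<and> l \<noteq> complex_of_real mu \<longrightarrow> cmod l < \<bar>mu\<bar>)"

end

theory Submission
  imports Defs
begin

(*
  Write M = DS J_0. Relabelling rows and columns 3 and 4 of the sign matrix turns the update
  sequence 1,4,3,1,2 into 1,3,4,1,2 composed with the phase swap S, and the fact that an AdaBoost
  update with column j leaves each sign class of column j with total weight 1/2 turns the
  resulting Jacobian identity into J_1 = DS J_0 DS. As DS is an involution, R = J_1 J_0 = M^2 and
  J_1 DS = M. If M has a dominant eigenvalue c > 0 (so that -c is not an eigenvalue), every
  eigenvector of M^2 for its dominant eigenvalue mu is an eigenvector of M for c and mu = c^2;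
  hence J_0 v_0 = DS M v_0 = c DS v_0 and J_1 DS v_0 = M v_0 = c v_0.
  The Jacobians are computed by forward-mode differentiation of the five updates, and their
  entries are enclosed by an interval certificate checked at p = p_*, d = d_*. Gadget A is the
  slice e = 0 of gadget B, on which the fifth row keeps weight 0, so one certificate serves both.
*)

section \<open>Forward-mode differentiation of AdaBoost runs\<close>

(* G i is the gradient of the weight u i; the quotient rule gives its update. *)
fun tangent_step :: "(nat \<Rightarrow> nat \<Rightarrow> real) \<Rightarrow> nat \<Rightarrow> nat \<Rightarrow> (nat \<Rightarrow> real) \<times> (nat \<Rightarrow> 'a::real_vector)
    \<Rightarrow> (nat \<Rightarrow> real) \<times> (nat \<Rightarrow> 'a)" where
  "tangent_step L m j (u, G) =
     (let mu = (\<Sum>l\<in>{1..m}. u l * L l j); s = (\<Sum>l\<in>{1..m}. L l j *\<^sub>R G l)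
      in (ada_step L m j u, \<lambda>i. (1 / (1 + mu * L i j)) *\<^sub>R (G i - (ada_step L m j u i * L i j) *\<^sub>R s)))"

definition tangent_run :: "(nat \<Rightarrow> nat \<Rightarrow> real) \<Rightarrow> nat \<Rightarrow> nat list \<Rightarrow> (nat \<Rightarrow> real) \<times> (nat \<Rightarrow> 'a::real_vector)
    \<Rightarrow> (nat \<Rightarrow> real) \<times> (nat \<Rightarrow> 'a)" where
  "tangent_run L m cs = fold (tangent_step L m) cs"

(* ada_step divides by 1 + mu L i j and x / 0 = 0 keeps runs total; differentiability needs
   every such denominator to be nonzero. *)
fun nonsingular_run :: "(nat \<Rightarrow> nat \<Rightarrow> real) \<Rightarrow> nat \<Rightarrow> nat list \<Rightarrow> (nat \<Rightarrow> real) \<Rightarrow> bool" where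
  "nonsingular_run L m [] u \<longleftrightarrow> True"
| "nonsingular_run L m (j # cs) u \<longleftrightarrow>
     (\<forall>i\<in>{1..m}. 1 + (\<Sum>l\<in>{1..m}. u l * L l j) * L i j \<noteq> 0) \<and> nonsingular_run L m cs (ada_step L m j u)"

lemma fst_tangent_step [simp]: "fst (tangent_step L m j st) = ada_step L m j (fst st)"
  by (cases st) (simp add: Let_def)

lemma fst_tangent_run [simp]: "fst (tangent_run L m cs st) = ada_run L m cs (fst st)"
  by (induction cs arbitrary: st) (simp_all add: tangent_run_def ada_run_def)

lemma has_derivative_ada_step:
  fixes U :: "'a::real_inner \<Rightarrow> nat \<Rightarrow> real"
  assumes U: "\<forall>i\<in>{1..m}. ((\<lambda>x. U x i) has_derivative (\<lambda>h. G i \<bullet> h)) (at P)"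
    and nz: "1 + (\<Sum>l\<in>{1..m}. U P l * L l j) * L i j \<noteq> 0" and i: "i \<in> {1..m}"
  shows "((\<lambda>x. ada_step L m j (U x) i) has_derivative (\<lambda>h. snd (tangent_step L m j (U P, G)) i \<bullet> h)) (at P)"
proof -
  define mu where "mu = (\<Sum>l\<in>{1..m}. U P l * L l j)"
  define s where "s = (\<Sum>l\<in>{1..m}. L l j *\<^sub>R G l)"
  have "((\<lambda>x. \<Sum>l\<in>{1..m}. U x l * L l j) has_derivative (\<lambda>h. \<Sum>l\<in>{1..m}. (G l \<bullet> h) * L l j)) (at P)"
    using U by (intro has_derivative_sum has_derivative_mult_left) auto
  moreover have "(\<lambda>h. \<Sum>l\<in>{1..m}. (G l \<bullet> h) * L l j) = (\<lambda>h. s \<bullet> h)"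
    by (simp add: s_def inner_sum_left mult.commute)
  ultimately have "((\<lambda>x. 1 + (\<Sum>l\<in>{1..m}. U x l * L l j) * L i j) has_derivative (\<lambda>h. (s \<bullet> h) * L i j)) (at P)"
    using has_derivative_add[OF has_derivative_const[of 1] has_derivative_mult_left] by fastforce
  from has_derivative_divide[OF U[rule_format, OF i] this] nz
  have deriv: "((\<lambda>x. U x i / (1 + (\<Sum>l\<in>{1..m}. U x l * L l j) * L i j)) has_derivative
     (\<lambda>h. - U P i * (inverse (1 + mu * L i j) * ((s \<bullet> h) * L i j) * inverse (1 + mu * L i j))
          + (G i \<bullet> h) / (1 + mu * L i j))) (at P)"
    by (simp add: mu_def)
  have snd_step: "snd (tangent_step L m j (U P, G)) i =
      (1 / (1 + mu * L i j)) *\<^sub>R (G i - (U P i / (1 + mu * L i j) * L i j) *\<^sub>R s)"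
    by (simp add: ada_step_def Let_def mu_def s_def)
  have derivative_eq: "(\<lambda>h. - U P i * (inverse (1 + mu * L i j) * ((s \<bullet> h) * L i j) * inverse (1 + mu * L i j))
          + (G i \<bullet> h) / (1 + mu * L i j)) = (\<lambda>h. snd (tangent_step L m j (U P, G)) i \<bullet> h)"
    unfolding snd_step by (simp add: inner_diff_left divide_inverse algebra_simps)
  moreover have "(\<lambda>x. ada_step L m j (U x) i) = (\<lambda>x. U x i / (1 + (\<Sum>l\<in>{1..m}. U x l * L l j) * L i j))"
    by (simp add: ada_step_def Let_def)
  ultimately show ?thesis
    using deriv by (simp only: derivative_eq)
qed

lemma has_derivative_ada_run:
  fixes U :: "'a::real_inner \<Rightarrow> nat \<Rightarrow> real"
  assumes "\<forall>i\<in>{1..m}. ((\<lambda>x. U x i) has_derivative (\<lambda>h. G i \<bullet> h)) (at P)"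
    and "nonsingular_run L m cs (U P)"
  shows "\<forall>i\<in>{1..m}. ((\<lambda>x. ada_run L m cs (U x) i) has_derivative
           (\<lambda>h. snd (tangent_run L m cs (U P, G)) i \<bullet> h)) (at P)"
  using assms
proof (induction cs arbitrary: U G)
  case Nil
  then show ?case by (simp add: ada_run_def tangent_run_def)
next
  case (Cons j cs)
  let ?U = "\<lambda>x. ada_step L m j (U x)" and ?G = "snd (tangent_step L m j (U P, G))"
  have "\<forall>i\<in>{1..m}. ((\<lambda>x. ?U x i) has_derivative (\<lambda>h. ?G i \<bullet> h)) (at P)"
  proof
    fix i assume "i \<in> {1..m}"
    then show "((\<lambda>x. ?U x i) has_derivative (\<lambda>h. ?G i \<bullet> h)) (at P)"
      using Cons.prems by (intro has_derivative_ada_step) auto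
  qed
  moreover have "tangent_step L m j (U P, G) = (?U P, ?G)"
    by (metis fst_conv fst_tangent_step prod.collapse)
  ultimately show ?case
    using Cons.IH[of ?U ?G] Cons.prems(2) by (simp add: ada_run_def tangent_run_def)
qed

section \<open>Conservation laws and relabelling\<close>

definition sign_column :: "(nat \<Rightarrow> nat \<Rightarrow> real) \<Rightarrow> nat \<Rightarrow> nat \<Rightarrow> bool" where
  "sign_column L m j \<longleftrightarrow> (\<forall>i\<in>{1..m}. L i j = 1 \<or> L i j = -1) \<and> (\<exists>i\<in>{1..m}. L i j = 1) \<and> (\<exists>i\<in>{1..m}. L i j = -1)"

lemma sum_sign_classes:
  fixes f :: "nat \<Rightarrow> 'a::real_vector"
  assumes "\<forall>i\<in>{1..m}. L i j = 1 \<or> L i j = -1"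
  shows "sum f {1..m} = sum f {i\<in>{1..m}. L i j = 1} + sum f {i\<in>{1..m}. L i j = -1}"
    and "(\<Sum>i\<in>{1..m}. L i j *\<^sub>R f i) = sum f {i\<in>{1..m}. L i j = 1} - sum f {i\<in>{1..m}. L i j = -1}"
proof -
  have split: "{1..m} = {i\<in>{1..m}. L i j = 1} \<union> {i\<in>{1..m}. L i j = -1}"
    and disj: "{i\<in>{1..m}. L i j = 1} \<inter> {i\<in>{1..m}. L i j = -1} = {}"
    using assms by auto
  show "sum f {1..m} = sum f {i\<in>{1..m}. L i j = 1} + sum f {i\<in>{1..m}. L i j = -1}"
    by (subst split, rule sum.union_disjoint) (use disj in auto)
  have "(\<Sum>i\<in>{1..m}. L i j *\<^sub>R f i) =
      (\<Sum>i\<in>{i\<in>{1..m}. L i j = 1}. L i j *\<^sub>R f i) + (\<Sum>i\<in>{i\<in>{1..m}. L i j = -1}. L i j *\<^sub>R f i)"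
    by (subst split, rule sum.union_disjoint) (use disj in auto)
  also have "\<dots> = sum f {i\<in>{1..m}. L i j = 1} - sum f {i\<in>{1..m}. L i j = -1}"
    by (simp add: sum_negf)
  finally show "(\<Sum>i\<in>{1..m}. L i j *\<^sub>R f i) = sum f {i\<in>{1..m}. L i j = 1} - sum f {i\<in>{1..m}. L i j = -1}" .
qed

lemma tangent_step_sign_class_sums:
  fixes G :: "nat \<Rightarrow> 'a::real_vector"
  assumes col: "sign_column L m j"
    and nz: "\<forall>i\<in>{1..m}. 1 + (\<Sum>l\<in>{1..m}. u l * L l j) * L i j \<noteq> 0"
    and su: "sum u {1..m} = 1" and sG: "sum G {1..m} = 0"
    and sigma: "\<sigma> = 1 \<or> \<sigma> = -1"
  shows "sum (fst (tangent_step L m j (u, G))) {i\<in>{1..m}. L i j = \<sigma>} = 1/2"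
    and "sum (snd (tangent_step L m j (u, G))) {i\<in>{1..m}. L i j = \<sigma>} = 0"
proof -
  define mu where "mu = (\<Sum>l\<in>{1..m}. u l * L l j)"
  define s where "s = (\<Sum>l\<in>{1..m}. L l j *\<^sub>R G l)"
  define S where "S = {i\<in>{1..m}. L i j = \<sigma>}"
  have signs: "\<forall>i\<in>{1..m}. L i j = 1 \<or> L i j = -1" using col by (simp add: sign_column_def)
  have "\<exists>i\<in>{1..m}. L i j = \<sigma>" using col sigma by (auto simp: sign_column_def)
  then have den: "1 + mu * \<sigma> \<noteq> 0" using nz by (auto simp: mu_def)
  have "mu = (\<Sum>l\<in>{1..m}. L l j *\<^sub>R u l)" by (simp add: mu_def mult.commute)
  then have su_S: "sum u S = (1 + mu * \<sigma>) / 2"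
    using sum_sign_classes[where L=L and j=j and m=m and f=u, OF signs] su sigma by (auto simp: S_def)
  have sG_S: "sum G S = (\<sigma> / 2) *\<^sub>R s"
  proof -
    define P N where "P = sum G {i\<in>{1..m}. L i j = 1}" and "N = sum G {i\<in>{1..m}. L i j = -1}"
    have "P + N = 0" "s = P - N"
      using sum_sign_classes[where L=L and j=j and m=m and f=G, OF signs] sG by (simp_all add: P_def N_def s_def)
    then have "N = - P" by (simp add: eq_neg_iff_add_eq_0 add.commute)
    with \<open>s = P - N\<close> have "s = 2 *\<^sub>R P" by (simp add: scaleR_2)
    with \<open>N = - P\<close> show ?thesis using sigma by (auto simp: S_def P_def N_def)
  qed
  have u': "ada_step L m j u i = u i / (1 + mu * \<sigma>)" if "i \<in> S" for i
    using that by (simp add: S_def ada_step_def Let_def mu_def)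
  have G': "snd (tangent_step L m j (u, G)) i = (1 / (1 + mu * \<sigma>)) *\<^sub>R (G i - (\<sigma> * u i / (1 + mu * \<sigma>)) *\<^sub>R s)"
    if "i \<in> S" for i
    using that by (simp add: S_def ada_step_def Let_def mu_def s_def mult.commute)
  have "sum (fst (tangent_step L m j (u, G))) S = (\<Sum>i\<in>S. u i / (1 + mu * \<sigma>))"
    by (simp add: u')
  also have "\<dots> = sum u S / (1 + mu * \<sigma>)"
    by (simp add: sum_divide_distrib)
  also have "\<dots> = 1/2" using den su_S by simp
  finally show "sum (fst (tangent_step L m j (u, G))) {i\<in>{1..m}. L i j = \<sigma>} = 1/2"
    by (simp add: S_def)
  have "sum (snd (tangent_step L m j (u, G))) S
      = (\<Sum>i\<in>S. (1 / (1 + mu * \<sigma>)) *\<^sub>R (G i - (\<sigma> * u i / (1 + mu * \<sigma>)) *\<^sub>R s))"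
    by (rule sum.cong[OF refl G'])
  also have "\<dots> = (1 / (1 + mu * \<sigma>)) *\<^sub>R (\<Sum>i\<in>S. G i - (\<sigma> * u i / (1 + mu * \<sigma>)) *\<^sub>R s)"
    by (simp only: scaleR_sum_right)
  also have "\<dots> = (1 / (1 + mu * \<sigma>)) *\<^sub>R (sum G S - (\<sigma> * sum u S / (1 + mu * \<sigma>)) *\<^sub>R s)"
    by (simp add: sum_subtractf sum_distrib_left sum_divide_distrib flip: scaleR_sum_left)
  also have "\<sigma> * sum u S / (1 + mu * \<sigma>) = \<sigma> / 2"
    using den by (simp add: su_S field_simps)
  also have "(1 / (1 + mu * \<sigma>)) *\<^sub>R (sum G S - (\<sigma> / 2) *\<^sub>R s) = 0"
    by (simp add: sG_S)
  finally show "sum (snd (tangent_step L m j (u, G))) {i\<in>{1..m}. L i j = \<sigma>} = 0"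
    by (simp add: S_def)
qed

lemma tangent_step_sums:
  fixes G :: "nat \<Rightarrow> 'a::real_vector"
  assumes "sign_column L m j" "\<forall>i\<in>{1..m}. 1 + (\<Sum>l\<in>{1..m}. u l * L l j) * L i j \<noteq> 0"
    and "sum u {1..m} = 1" "sum G {1..m} = 0"
  shows "sum (fst (tangent_step L m j (u, G))) {1..m} = 1"
    and "sum (snd (tangent_step L m j (u, G))) {1..m} = 0"
proof -
  have signs: "\<forall>i\<in>{1..m}. L i j = 1 \<or> L i j = -1" using assms(1) by (simp add: sign_column_def)
  obtain u' G' where st: "tangent_step L m j (u, G) = (u', G')" by fastforce
  have "sum u' {i\<in>{1..m}. L i j = 1} = 1/2" "sum u' {i\<in>{1..m}. L i j = -1} = 1/2"
    "sum G' {i\<in>{1..m}. L i j = 1} = 0" "sum G' {i\<in>{1..m}. L i j = -1} = 0"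
    using tangent_step_sign_class_sums[OF assms, of 1] tangent_step_sign_class_sums[OF assms, of "-1"]
    unfolding st by simp_all
  then show "sum (fst (tangent_step L m j (u, G))) {1..m} = 1" "sum (snd (tangent_step L m j (u, G))) {1..m} = 0"
    unfolding st fst_conv snd_conv sum_sign_classes(1)[where L=L and j=j and m=m, OF signs] by simp_all
qed

lemma nonsingular_run_append:
  "nonsingular_run L m (cs @ cs') u \<longleftrightarrow> nonsingular_run L m cs u \<and> nonsingular_run L m cs' (ada_run L m cs u)"
  by (induction cs arbitrary: u) (simp_all add: ada_run_def)

lemma tangent_run_sums:
  fixes G :: "nat \<Rightarrow> 'a::real_vector"
  assumes "\<forall>j\<in>set cs. sign_column L m j" "nonsingular_run L m cs u"
    and "sum u {1..m} = 1" "sum G {1..m} = 0"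
  shows "sum (fst (tangent_run L m cs (u, G))) {1..m} = 1 \<and> sum (snd (tangent_run L m cs (u, G))) {1..m} = 0"
  using assms
proof (induction cs arbitrary: u G)
  case Nil
  then show ?case by (simp add: tangent_run_def)
next
  case (Cons j cs)
  obtain u' G' where st: "tangent_step L m j (u, G) = (u', G')" by fastforce
  have "u' = ada_step L m j u" using st by (metis fst_conv fst_tangent_step)
  moreover have "sum u' {1..m} = 1" "sum G' {1..m} = 0"
    using tangent_step_sums[of L m j u G] Cons.prems unfolding st by simp_all
  ultimately show ?case
    using Cons.IH[of u' G'] Cons.prems st by (simp add: tangent_run_def)
qed

(* The derivative of the AdaBoost property that after an update with column j each sign class
   of column j carries weight 1/2. *)
lemma tangent_run_last_column_sum:
  fixes G :: "nat \<Rightarrow> 'a::real_vector"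
  assumes "\<forall>c\<in>set (cs @ [j]). sign_column L m c" "nonsingular_run L m (cs @ [j]) u"
    and "sum u {1..m} = 1" "sum G {1..m} = 0"
  shows "sum (snd (tangent_run L m (cs @ [j]) (u, G))) {i\<in>{1..m}. L i j = -1} = 0"
proof -
  obtain u' G' where st: "tangent_run L m cs (u, G) = (u', G')" by fastforce
  have u': "u' = ada_run L m cs u" using st by (metis fst_conv fst_tangent_run)
  have "sum u' {1..m} = 1" "sum G' {1..m} = 0"
    using tangent_run_sums[of cs L m u G] assms st by (simp_all add: nonsingular_run_append)
  moreover have "\<forall>i\<in>{1..m}. 1 + (\<Sum>l\<in>{1..m}. u' l * L l j) * L i j \<noteq> 0"
    using assms(2) u' by (simp add: nonsingular_run_append)
  ultimately show ?thesis
    using tangent_step_sign_class_sums(2)[of L m j u' G' "-1"] assms(1) st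
    by (simp add: tangent_run_def)
qed

lemma ada_run_relabel:
  assumes bij: "bij_betw \<sigma> {1..m} {1..m}"
    and L: "\<forall>j\<in>set cs. \<forall>i\<in>{1..m}. L (\<sigma> i) (\<tau> j) = L i j"
    and w: "\<forall>i\<in>{1..m}. w i = u (\<sigma> i)"
  shows "\<forall>i\<in>{1..m}. ada_run L m cs w i = ada_run L m (map \<tau> cs) u (\<sigma> i)"
  using L w
proof (induction cs arbitrary: u w)
  case Nil
  then show ?case by (simp add: ada_run_def)
next
  case (Cons j cs)
  have "(\<Sum>i\<in>{1..m}. w i * L i j) = (\<Sum>i\<in>{1..m}. u (\<sigma> i) * L (\<sigma> i) (\<tau> j))"
    using Cons.prems by (intro sum.cong) auto
  also have "\<dots> = (\<Sum>k\<in>{1..m}. u k * L k (\<tau> j))"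
    using sum.reindex_bij_betw[OF bij, of "\<lambda>k. u k * L k (\<tau> j)"] by simp
  finally have "\<forall>i\<in>{1..m}. ada_step L m j w i = ada_step L m (\<tau> j) u (\<sigma> i)"
    using Cons.prems by (simp add: ada_step_def Let_def)
  then show ?case
    using Cons.IH[where u="ada_step L m (\<tau> j) u" and w="ada_step L m j w"] Cons.prems(1) by (simp add: ada_run_def)
qed

lemma ada_run_zero_row:
  assumes L: "\<forall>j\<in>set cs. \<forall>i\<in>{1..m}. L' i j = L i j"
    and u: "\<forall>i\<in>{1..m}. u' i = u i" and zero: "u' (Suc m) = 0"
  shows "(\<forall>i\<in>{1..m}. ada_run L' (Suc m) cs u' i = ada_run L m cs u i) \<and> ada_run L' (Suc m) cs u' (Suc m) = 0"
  using L u zero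
proof (induction cs arbitrary: u u')
  case Nil
  then show ?case by (simp add: ada_run_def)
next
  case (Cons j cs)
  have "(\<Sum>i\<in>{1..m}. u' i * L' i j) = (\<Sum>i\<in>{1..m}. u i * L i j)"
    using Cons.prems by (intro sum.cong) auto
  then have "(\<Sum>i\<in>{1..Suc m}. u' i * L' i j) = (\<Sum>i\<in>{1..m}. u i * L i j)"
    using Cons.prems(3) by (simp add: sum.cl_ivl_Suc)
  then have "(\<forall>i\<in>{1..m}. ada_step L' (Suc m) j u' i = ada_step L m j u i) \<and> ada_step L' (Suc m) j u' (Suc m) = 0"
    using Cons.prems by (simp add: ada_step_def Let_def)
  then show ?case
    using Cons.IH[where u="ada_step L m j u" and u'="ada_step L' (Suc m) j u'"] Cons.prems(1) by (simp add: ada_run_def)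
qed

section \<open>Interval enclosures\<close>

lemma abs_triangle_ineq_sum3: "\<bar>a + b + c\<bar> \<le> \<bar>a\<bar> + \<bar>b\<bar> + (\<bar>c\<bar> :: 'a::linordered_idom)"
  by (rule order_trans[OF abs_triangle_ineq add_right_mono[OF abs_triangle_ineq]])

(* [a - r, a + r] / [b - s, b + s] lies in [c - t, c + t]. *)
definition quotient_certified :: "real \<Rightarrow> real \<Rightarrow> real \<Rightarrow> real \<Rightarrow> real \<Rightarrow> real \<Rightarrow> bool" where
  "quotient_certified a r b s c t \<longleftrightarrow> s < \<bar>b\<bar> \<and> \<bar>a - c * b\<bar> + r + \<bar>c\<bar> * s \<le> t * (\<bar>b\<bar> - s)"

lemma enclosure_divide:
  fixes x y :: real
  assumes x: "\<bar>x - a\<bar> \<le> r" and y: "\<bar>y - b\<bar> \<le> s" and q: "quotient_certified a r b s c t"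
  shows "\<bar>x / y - c\<bar> \<le> t" and "y \<noteq> 0"
proof -
  have s: "s < \<bar>b\<bar>" and ineq: "\<bar>a - c * b\<bar> + r + \<bar>c\<bar> * s \<le> t * (\<bar>b\<bar> - s)"
    using q by (auto simp: quotient_certified_def)
  have y_lower: "\<bar>b\<bar> - s \<le> \<bar>y\<bar>" using y by linarith
  then show "y \<noteq> 0" using s by auto
  have "0 \<le> t * (\<bar>b\<bar> - s)" using ineq x y by (smt (verit) abs_ge_zero mult_nonneg_nonneg)
  then have t: "0 \<le> t" using s by (simp add: zero_le_mult_iff)
  have split: "x - c * y = (x - a) + (a - c * b) + c * (b - y)" by (simp add: algebra_simps)
  have "\<bar>x - c * y\<bar> \<le> \<bar>x - a\<bar> + \<bar>a - c * b\<bar> + \<bar>c * (b - y)\<bar>"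
    unfolding split by (rule abs_triangle_ineq_sum3)
  also have "\<dots> = \<bar>x - a\<bar> + \<bar>a - c * b\<bar> + \<bar>c\<bar> * \<bar>y - b\<bar>" by (simp add: abs_mult abs_minus_commute)
  also have "\<dots> \<le> r + \<bar>a - c * b\<bar> + \<bar>c\<bar> * s" using x y by (intro add_mono order_refl mult_left_mono) auto
  also have "\<dots> \<le> t * (\<bar>b\<bar> - s)" using ineq by simp
  also have "\<dots> \<le> t * \<bar>y\<bar>" using y_lower t by (simp add: mult_left_mono)
  finally have "\<bar>x - c * y\<bar> \<le> t * \<bar>y\<bar>" .
  moreover have "x / y - c = (x - c * y) / y" using \<open>y \<noteq> 0\<close> by (simp add: field_simps)
  ultimately show "\<bar>x / y - c\<bar> \<le> t" using \<open>y \<noteq> 0\<close> by (simp add: abs_divide divide_le_eq)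
qed

lemma enclosure_mult:
  fixes x y :: real
  assumes "\<bar>x - a\<bar> \<le> r" "\<bar>y - b\<bar> \<le> s"
  shows "\<bar>x * y - a * b\<bar> \<le> \<bar>a\<bar> * s + \<bar>b\<bar> * r + r * s"
proof -
  have split: "x * y - a * b = a * (y - b) + b * (x - a) + (x - a) * (y - b)" by (simp add: algebra_simps)
  have "\<bar>x * y - a * b\<bar> \<le> \<bar>a * (y - b)\<bar> + \<bar>b * (x - a)\<bar> + \<bar>(x - a) * (y - b)\<bar>"
    unfolding split by (rule abs_triangle_ineq_sum3)
  also have "\<dots> = \<bar>a\<bar> * \<bar>y - b\<bar> + \<bar>b\<bar> * \<bar>x - a\<bar> + \<bar>x - a\<bar> * \<bar>y - b\<bar>"
    by (simp add: abs_mult)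
  also have "\<dots> \<le> \<bar>a\<bar> * s + \<bar>b\<bar> * r + r * s"
    using assms by (intro add_mono mult_mono mult_left_mono) auto
  finally show ?thesis .
qed

lemma enclosure_sum:
  fixes x a r w :: "nat \<Rightarrow> real"
  assumes "\<forall>i\<in>S. \<bar>x i - a i\<bar> \<le> r i"
  shows "\<bar>(\<Sum>i\<in>S. x i * w i) - (\<Sum>i\<in>S. a i * w i)\<bar> \<le> (\<Sum>i\<in>S. r i * \<bar>w i\<bar>)"
proof -
  have "\<bar>(\<Sum>i\<in>S. x i * w i) - (\<Sum>i\<in>S. a i * w i)\<bar> = \<bar>\<Sum>i\<in>S. (x i - a i) * w i\<bar>"
    by (simp add: sum_subtractf left_diff_distrib)
  also have "\<dots> \<le> (\<Sum>i\<in>S. \<bar>(x i - a i) * w i\<bar>)" by (rule sum_abs)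
  also have "\<dots> = (\<Sum>i\<in>S. \<bar>x i - a i\<bar> * \<bar>w i\<bar>)" by (simp add: abs_mult)
  also have "\<dots> \<le> (\<Sum>i\<in>S. r i * \<bar>w i\<bar>)" using assms by (intro sum_mono mult_right_mono) auto
  finally show ?thesis .
qed

lemma enclosure_tangent_entry:
  fixes g q s den :: real
  assumes g: "\<bar>g - cg\<bar> \<le> rg" and q: "\<bar>q - cq\<bar> \<le> rq" and s: "\<bar>s - cs\<bar> \<le> rs"
    and den: "\<bar>den - cden\<bar> \<le> rden"
    and cert: "quotient_certified (cg - cq * l * cs) (rg + \<bar>l\<bar> * (\<bar>cq\<bar> * rs + \<bar>cs\<bar> * rq + rq * rs)) cden rden c r"
  shows "\<bar>(g - q * l * s) / den - c\<bar> \<le> r"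
proof -
  have prod: "\<bar>q * s - cq * cs\<bar> \<le> \<bar>cq\<bar> * rs + \<bar>cs\<bar> * rq + rq * rs"
    using q s by (rule enclosure_mult)
  have "(g - q * l * s) - (cg - cq * l * cs) = (g - cg) - l * (q * s - cq * cs)"
    by (simp add: algebra_simps)
  then have "\<bar>(g - q * l * s) - (cg - cq * l * cs)\<bar> \<le> \<bar>g - cg\<bar> + \<bar>l\<bar> * \<bar>q * s - cq * cs\<bar>"
    by (metis abs_mult abs_triangle_ineq4)
  also have "\<dots> \<le> rg + \<bar>l\<bar> * (\<bar>cq\<bar> * rs + \<bar>cs\<bar> * rq + rq * rs)"
    using g prod by (intro add_mono mult_left_mono) auto
  finally show ?thesis using enclosure_divide(1)[OF _ den cert] by blast
qed

(* Centres and radii of a componentwise enclosure of a tangent state. *)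
type_synonym 'n box = "((nat \<Rightarrow> real) \<times> (nat \<Rightarrow> real^'n)) \<times> ((nat \<Rightarrow> real) \<times> (nat \<Rightarrow> real^'n))"

fun enclosed :: "nat \<Rightarrow> (nat \<Rightarrow> real) \<times> (nat \<Rightarrow> real^'n::finite) \<Rightarrow> 'n box \<Rightarrow> bool" where
  "enclosed m (u, G) ((cu, cg), (ru, rg)) \<longleftrightarrow>
     (\<forall>i\<in>{1..m}. \<bar>u i - cu i\<bar> \<le> ru i \<and> (\<forall>k. \<bar>G i $ k - cg i $ k\<bar> \<le> rg i $ k))"

fun step_certified :: "(nat \<Rightarrow> nat \<Rightarrow> real) \<Rightarrow> nat \<Rightarrow> nat \<Rightarrow> 'n::finite box \<Rightarrow> 'n box \<Rightarrow> bool" where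
  "step_certified L m j ((cu, cg), (ru, rg)) ((cu', cg'), (ru', rg')) \<longleftrightarrow>
     (let cmu = (\<Sum>l\<in>{1..m}. cu l * L l j); rmu = (\<Sum>l\<in>{1..m}. ru l * \<bar>L l j\<bar>) in
      \<forall>i\<in>{1..m}. quotient_certified (cu i) (ru i) (1 + cmu * L i j) (rmu * \<bar>L i j\<bar>) (cu' i) (ru' i) \<and>
        (\<forall>k. let cs = (\<Sum>l\<in>{1..m}. cg l $ k * L l j); rs = (\<Sum>l\<in>{1..m}. rg l $ k * \<bar>L l j\<bar>) in
          quotient_certified (cg i $ k - cu' i * L i j * cs)
            (rg i $ k + \<bar>L i j\<bar> * (\<bar>cu' i\<bar> * rs + \<bar>cs\<bar> * ru' i + ru' i * rs))
            (1 + cmu * L i j) (rmu * \<bar>L i j\<bar>) (cg' i $ k) (rg' i $ k)))"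

lemma enclosed_tangent_step:
  assumes encl: "enclosed m (u, G) B" and cert: "step_certified L m j B B'"
  shows "(\<forall>i\<in>{1..m}. 1 + (\<Sum>l\<in>{1..m}. u l * L l j) * L i j \<noteq> 0) \<and> enclosed m (tangent_step L m j (u, G)) B'"
proof -
  obtain cu cg ru rg cu' cg' ru' rg' where B: "B = ((cu, cg), (ru, rg))" and B': "B' = ((cu', cg'), (ru', rg'))"
    by (metis prod.collapse)
  define mu where "mu = (\<Sum>l\<in>{1..m}. u l * L l j)"
  define cmu where "cmu = (\<Sum>l\<in>{1..m}. cu l * L l j)"
  define rmu where "rmu = (\<Sum>l\<in>{1..m}. ru l * \<bar>L l j\<bar>)"
  have U: "\<forall>i\<in>{1..m}. \<bar>u i - cu i\<bar> \<le> ru i" and GG: "\<forall>i\<in>{1..m}. \<forall>k. \<bar>G i $ k - cg i $ k\<bar> \<le> rg i $ k"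
    using encl by (simp_all add: B)
  have "\<bar>mu - cmu\<bar> \<le> rmu"
    using enclosure_sum[OF U, of "\<lambda>l. L l j"] by (simp add: mu_def cmu_def rmu_def)
  then have den: "\<bar>(1 + mu * L i j) - (1 + cmu * L i j)\<bar> \<le> rmu * \<bar>L i j\<bar>" for i
    using mult_right_mono[OF _ abs_ge_zero] by (simp add: abs_mult flip: left_diff_distrib)
  have u': "\<bar>u i / (1 + mu * L i j) - cu' i\<bar> \<le> ru' i" and nz: "1 + mu * L i j \<noteq> 0"
    if i: "i \<in> {1..m}" for i
  proof -
    have "quotient_certified (cu i) (ru i) (1 + cmu * L i j) (rmu * \<bar>L i j\<bar>) (cu' i) (ru' i)"
      using cert i by (simp add: B B' Let_def cmu_def rmu_def)
    moreover have "\<bar>u i - cu i\<bar> \<le> ru i" using U i by blast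
    ultimately show "\<bar>u i / (1 + mu * L i j) - cu' i\<bar> \<le> ru' i" "1 + mu * L i j \<noteq> 0"
      using enclosure_divide[OF _ den[of i]] by blast+
  qed
  have G': "\<bar>snd (tangent_step L m j (u, G)) i $ k - cg' i $ k\<bar> \<le> rg' i $ k" if i: "i \<in> {1..m}" for i k
  proof -
    define sk where "sk = (\<Sum>l\<in>{1..m}. G l $ k * L l j)"
    define cs where "cs = (\<Sum>l\<in>{1..m}. cg l $ k * L l j)"
    define rs where "rs = (\<Sum>l\<in>{1..m}. rg l $ k * \<bar>L l j\<bar>)"
    have s: "\<bar>sk - cs\<bar> \<le> rs" unfolding sk_def cs_def rs_def by (rule enclosure_sum) (use GG in auto)
    have g: "\<bar>G i $ k - cg i $ k\<bar> \<le> rg i $ k" using GG i by blast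
    have certified: "quotient_certified (cg i $ k - cu' i * L i j * cs) (rg i $ k + \<bar>L i j\<bar> * (\<bar>cu' i\<bar> * rs + \<bar>cs\<bar> * ru' i + ru' i * rs))
        (1 + cmu * L i j) (rmu * \<bar>L i j\<bar>) (cg' i $ k) (rg' i $ k)"
      using cert i by (simp add: B B' Let_def cmu_def rmu_def cs_def rs_def)
    have "snd (tangent_step L m j (u, G)) i $ k
        = (G i $ k - u i / (1 + mu * L i j) * L i j * sk) / (1 + mu * L i j)"
      by (simp add: ada_step_def Let_def sk_def mu_def sum_distrib_left mult_ac)
    then show ?thesis
      using enclosure_tangent_entry[OF g u'[OF i] s den certified] by simp
  qed
  show ?thesis
    using nz u' G' by (simp add: B' mu_def ada_step_def Let_def)
qed

fun run_certified :: "(nat \<Rightarrow> nat \<Rightarrow> real) \<Rightarrow> nat \<Rightarrow> nat list \<Rightarrow> 'n::finite box list \<Rightarrow> bool" where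
  "run_certified L m [] [B] \<longleftrightarrow> True"
| "run_certified L m (j # cs) (B # B' # Bs) \<longleftrightarrow> step_certified L m j B B' \<and> run_certified L m cs (B' # Bs)"
| "run_certified L m _ _ \<longleftrightarrow> False"

lemma enclosed_tangent_run:
  assumes "enclosed m st B" "run_certified L m cs (B # Bs)"
  shows "nonsingular_run L m cs (fst st) \<and> enclosed m (tangent_run L m cs st) (last (B # Bs))"
  using assms
proof (induction cs arbitrary: st B Bs)
  case Nil
  then show ?case by (cases Bs) (simp_all add: tangent_run_def)
next
  case (Cons j cs)
  then obtain B' Bs' where Bs: "Bs = B' # Bs'" by (cases Bs) auto
  obtain u G where st: "st = (u, G)" by fastforce
  have step: "step_certified L m j B B'" and rest: "run_certified L m cs (B' # Bs')"
    using Cons.prems(2) by (simp_all add: Bs)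
  from enclosed_tangent_step[OF Cons.prems(1)[unfolded st] step]
  have nz: "\<forall>i\<in>{1..m}. 1 + (\<Sum>l\<in>{1..m}. u l * L l j) * L i j \<noteq> 0"
    and encl: "enclosed m (tangent_step L m j (u, G)) B'"
    by auto
  have "tangent_run L m (j # cs) st = tangent_run L m cs (tangent_step L m j (u, G))"
    by (simp add: tangent_run_def st del: tangent_step.simps)
  then show ?case
    using Cons.IH[OF encl rest] nz by (simp add: st Bs del: tangent_step.simps)
qed

section \<open>Squares of matrices with a dominant eigenvalue\<close>

definition complexify :: "real^'n^'m \<Rightarrow> complex^'n^'m" where
  "complexify R = (\<chi> i j. complex_of_real (R $ i $ j))"

lemma complexify_nth [simp]: "complexify R $ i $ j = complex_of_real (R $ i $ j)"
  by (simp add: complexify_def)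

lemma complex_eigenvalue_iff: "complex_eigenvalue R l \<longleftrightarrow> (\<exists>w. w \<noteq> 0 \<and> complexify R *v w = l *s w)"
  by (simp add: complex_eigenvalue_def complexify_def)

lemma complexify_mult: "complexify (A ** B) = complexify A ** complexify B"
  by (simp add: vec_eq_iff matrix_matrix_mult_def)

lemma complexify_mult_vec: "complexify A *v (\<chi> i. complex_of_real (v $ i)) = (\<chi> i. complex_of_real ((A *v v) $ i))"
  by (simp add: vec_eq_iff matrix_vector_mult_def)

lemma complex_eigenvalue_of_real:
  assumes "R *v v = l *s v" "v \<noteq> 0"
  shows "complex_eigenvalue R (complex_of_real l)"
  unfolding complex_eigenvalue_iff
proof (intro exI conjI)
  show "(\<chi> i. complex_of_real (v $ i)) \<noteq> 0" using assms(2) by (auto simp: vec_eq_iff)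
  show "complexify R *v (\<chi> i. complex_of_real (v $ i)) = complex_of_real l *s (\<chi> i. complex_of_real (v $ i))"
    using assms(1) by (simp add: complexify_mult_vec vec_eq_iff)
qed

lemma square_eigenvector_split:
  fixes M :: "'a::field^'n^'n"
  assumes "(M ** M) *v v = (s * s) *s v"
  shows "M *v (M *v v - s *s v) = (- s) *s (M *v v - s *s v)"
proof -
  have "M *v (M *v v - s *s v) = (M ** M) *v v - s *s (M *v v)"
    by (simp add: matrix_vector_mult_diff_distrib matrix_vector_mul_assoc vector_scalar_commute)
  also have "\<dots> = (- s) *s (M *v v - s *s v)"
    using assms by (simp add: vec_eq_iff algebra_simps)
  finally show ?thesis .
qed

lemma complex_eigenvalue_of_square:
  fixes M :: "real^'n^'n"
  assumes "(M ** M) *v v = \<mu> *s v" "v \<noteq> 0"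
  shows "\<exists>s. (cmod s)\<^sup>2 = \<bar>\<mu>\<bar> \<and> complex_eigenvalue M s"
proof -
  define s where "s = csqrt (complex_of_real \<mu>)"
  define cv where "cv = (\<chi> i. complex_of_real (v $ i))"
  have "(complexify M ** complexify M) *v cv = (s * s) *s cv"
    using assms(1) by (simp add: cv_def s_def complexify_mult_vec flip: complexify_mult power2_eq_square)
      (simp add: vec_eq_iff)
  note split = square_eigenvector_split[OF this]
  have cv: "cv \<noteq> 0" using assms(2) by (auto simp: cv_def vec_eq_iff)
  have "complex_eigenvalue M s \<or> complex_eigenvalue M (- s)"
  proof (cases "complexify M *v cv - s *s cv = 0")
    case True
    then show ?thesis using cv by (auto simp: complex_eigenvalue_iff)
  next
    case False
    then have "complex_eigenvalue M (- s)"
      unfolding complex_eigenvalue_iff using split by blast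
    then show ?thesis ..
  qed
  moreover have "(cmod s)\<^sup>2 = \<bar>\<mu>\<bar>" by (simp add: s_def flip: norm_power)
  ultimately show ?thesis by (metis norm_minus_cancel)
qed

(* An eigenvalue of M^2 of modulus above c^2 would give one of M of modulus above c; and -c,
   not being an eigenvalue of M, forces M v = c v. *)
lemma dominant_eigenvalue_square:
  fixes M :: "real^'n^'n"
  assumes c: "dominant_eigenvalue M c" and c_pos: "0 < c"
    and mu: "dominant_eigenvalue (M ** M) \<mu>" and v: "(M ** M) *v v = \<mu> *s v" "v \<noteq> 0"
  shows "\<mu> = c\<^sup>2 \<and> M *v v = c *s v"
proof -
  have spec_strict: "cmod l < c" if "complex_eigenvalue M l" "l \<noteq> complex_of_real c" for l
    using c c_pos that by (auto simp: dominant_eigenvalue_def)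
  have spec: "cmod l \<le> c" if "complex_eigenvalue M l" for l
    using spec_strict[OF that] c_pos by (cases "l = complex_of_real c") (auto simp: norm_of_real)
  obtain w where w: "w \<noteq> 0" "M *v w = c *s w" using c by (auto simp: dominant_eigenvalue_def)
  then have "(M ** M) *v w = (c\<^sup>2) *s w"
    by (simp flip: matrix_vector_mul_assoc add: vector_scalar_commute power2_eq_square)
  then have large: "complex_eigenvalue (M ** M) (complex_of_real (c\<^sup>2))"
    using w(1) by (rule complex_eigenvalue_of_real)
  have mu_eq: "\<mu> = c\<^sup>2"
  proof (rule ccontr)
    assume "\<mu> \<noteq> c\<^sup>2"
    then have "c\<^sup>2 < \<bar>\<mu>\<bar>"
      using mu large by (auto simp: dominant_eigenvalue_def norm_of_real simp del: of_real_power)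
    moreover obtain s where "(cmod s)\<^sup>2 = \<bar>\<mu>\<bar>" "complex_eigenvalue M s"
      using complex_eigenvalue_of_square[OF v] by blast
    ultimately have "c < cmod s" "cmod s \<le> c"
      using spec by (metis power_less_imp_less_base norm_ge_zero)+
    then show False by simp
  qed
  have split: "M *v (M *v v - c *s v) = (- c) *s (M *v v - c *s v)"
    using v(1) mu_eq by (intro square_eigenvector_split) (simp add: power2_eq_square)
  have "M *v v - c *s v = 0"
  proof (rule ccontr)
    assume "M *v v - c *s v \<noteq> 0"
    with split have "complex_eigenvalue M (complex_of_real (- c))"
      by (rule complex_eigenvalue_of_real)
    moreover have "complex_of_real (- c) \<noteq> complex_of_real c" using c_pos by simp
    ultimately show False using spec_strict by fastforce
  qed
  then show ?thesis using mu_eq by simp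
qed

lemma char_poly_2x2_of_eigen_equations:
  fixes a b c d l x y :: "'a::field"
  assumes "a * x + b * y = l * x" "c * x + d * y = l * y" "x \<noteq> 0 \<or> y \<noteq> 0"
  shows "(l - a) * (l - d) = b * c"
proof -
  have ax: "(l - a) * x = b * y" and dy: "(l - d) * y = c * x"
    using assms(1,2) by (simp_all add: algebra_simps)
  have "(l - a) * (l - d) * x = b * c * x"
    by (metis ax dy mult.assoc mult.commute)
  moreover have "(l - a) * (l - d) * y = b * c * y"
    by (metis ax dy mult.assoc mult.commute)
  ultimately show ?thesis using assms(3) by auto
qed

lemma eigenvalue_2x2:
  fixes M :: "'a::field^2^2"
  assumes "M *v w = l *s w" "w \<noteq> 0"
  shows "(l - M$1$1) * (l - M$2$2) = M$1$2 * M$2$1"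
  using assms by (intro char_poly_2x2_of_eigen_equations[where x="w$1" and y="w$2"])
    (auto simp: vec_eq_iff forall_2 matrix_vector_mult_def sum_2)

lemma eigenvalue_3x3_block:
  fixes M :: "'a::field^3^3"
  assumes "M$3$1 = 0" "M$3$2 = 0" "M *v w = l *s w" "w \<noteq> 0"
  shows "l = M$3$3 \<or> (l - M$1$1) * (l - M$2$2) = M$1$2 * M$2$1"
proof (cases "l = M$3$3")
  case False
  have rows: "M$1$1 * w$1 + M$1$2 * w$2 + M$1$3 * w$3 = l * w$1"
    "M$2$1 * w$1 + M$2$2 * w$2 + M$2$3 * w$3 = l * w$2" "M$3$3 * w$3 = l * w$3"
    using assms(1-3) by (auto simp: vec_eq_iff forall_3 matrix_vector_mult_def sum_3)
  then have "w$3 = 0" using False by auto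
  then have "M$1$1 * w$1 + M$1$2 * w$2 = l * w$1" "M$2$1 * w$1 + M$2$2 * w$2 = l * w$2" "w$1 \<noteq> 0 \<or> w$2 \<noteq> 0"
    using rows assms(4) by (auto simp: vec_eq_iff forall_3)
  then show ?thesis by (blast intro: char_poly_2x2_of_eigen_equations)
qed simp

lemma quadratic_factor:
  fixes A B C D Q l :: "'a::field_char_0"
  assumes "Q\<^sup>2 = (A - D)\<^sup>2 + 4 * B * C"
  shows "(l - A) * (l - D) - B * C = (l - (A + D + Q) / 2) * (l - (A + D - Q) / 2)"
proof -
  have "4 * ((l - (A + D + Q) / 2) * (l - (A + D - Q) / 2)) = (2 * l - A - D)\<^sup>2 - Q\<^sup>2"
    by (simp add: field_simps power2_eq_square)
  also have "\<dots> = 4 * ((l - A) * (l - D) - B * C)"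
    using assms by (simp add: algebra_simps power2_eq_square)
  finally show ?thesis by (subst (asm) mult_cancel_left) simp
qed

lemma char_poly_2x2_factor:
  fixes a b c d :: real and l :: complex
  assumes "0 \<le> (a - d)\<^sup>2 + 4 * b * c"
  defines "q \<equiv> sqrt ((a - d)\<^sup>2 + 4 * b * c)"
  shows "(l - of_real a) * (l - of_real d) - of_real b * of_real c
       = (l - of_real ((a + d + q) / 2)) * (l - of_real ((a + d - q) / 2))"
proof -
  have "q\<^sup>2 = (a - d)\<^sup>2 + 4 * b * c" using assms by (simp add: q_def)
  then have "complex_of_real (q\<^sup>2) = complex_of_real ((a - d)\<^sup>2 + 4 * b * c)"
    by (rule arg_cong)
  then have "(complex_of_real q)\<^sup>2 = (of_real a - of_real d)\<^sup>2 + 4 * of_real b * of_real c"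
    by simp
  from quadratic_factor[OF this, of l] show ?thesis by simp
qed

lemma char_poly_2x2_roots:
  fixes a b c d :: real and l :: complex
  assumes "0 \<le> (a - d)\<^sup>2 + 4 * b * c" "(l - of_real a) * (l - of_real d) = of_real b * of_real c"
  shows "l = of_real ((a + d + sqrt ((a - d)\<^sup>2 + 4 * b * c)) / 2) \<or>
         l = of_real ((a + d - sqrt ((a - d)\<^sup>2 + 4 * b * c)) / 2)"
  using char_poly_2x2_factor[OF assms(1), of l] assms(2) by simp

lemma char_poly_2x2_real_root:
  fixes a b c d :: real
  assumes "0 \<le> (a - d)\<^sup>2 + 4 * b * c"
  defines "q \<equiv> sqrt ((a - d)\<^sup>2 + 4 * b * c)"
  shows "(g - a) * (g - d) - b * c = (g - (a + d + q) / 2) * (g - (a + d - q) / 2)"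
proof -
  have "complex_of_real ((g - a) * (g - d) - b * c) = complex_of_real ((g - (a + d + q) / 2) * (g - (a + d - q) / 2))"
    using char_poly_2x2_factor[OF assms(1), of "of_real g"] by (simp add: q_def)
  then show ?thesis by (rule of_real_eq_iff[THEN iffD1])
qed

lemma eigenvector_2x2:
  fixes M :: "real^2^2"
  assumes "(r - M$1$1) * (r - M$2$2) = M$1$2 * M$2$1" "M$1$2 \<noteq> 0"
  shows "\<exists>w. w \<noteq> 0 \<and> M *v w = r *s w"
proof (intro exI conjI)
  show "vector [M$1$2, r - M$1$1] \<noteq> (0 :: real^2)" using assms(2) by (auto simp: vec_eq_iff forall_2)
  show "M *v vector [M$1$2, r - M$1$1] = r *s vector [M$1$2, r - M$1$1]"
    using assms(1) by (auto simp: vec_eq_iff forall_2 matrix_vector_mult_def sum_2 algebra_simps)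
qed

lemma eigenvector_3x3_block:
  fixes M :: "real^3^3"
  assumes "M$3$1 = 0" "M$3$2 = 0" and D: "(M$3$3 - M$1$1) * (M$3$3 - M$2$2) - M$1$2 * M$2$1 \<noteq> 0"
  shows "\<exists>w. w \<noteq> 0 \<and> M *v w = M$3$3 *s w"
proof -
  define a b c d f1 f2 g where "a = M$1$1" and "b = M$1$2" and "c = M$2$1" and "d = M$2$2"
    and "f1 = M$1$3" and "f2 = M$2$3" and "g = M$3$3"
  define D where "D = (g - a) * (g - d) - b * c"
  \<comment> \<open>Cramer's rule for the upper block gives the first two entries.\<close>
  define w :: "real^3" where "w = vector [b * f2 - (d - g) * f1, c * f1 - (a - g) * f2, D]"
  have "a * (b * f2 - (d - g) * f1) + b * (c * f1 - (a - g) * f2) + f1 * D = g * (b * f2 - (d - g) * f1)"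
    "c * (b * f2 - (d - g) * f1) + d * (c * f1 - (a - g) * f2) + f2 * D = g * (c * f1 - (a - g) * f2)"
    by (simp_all add: D_def algebra_simps)
  then have "M *v w = g *s w"
    using assms(1,2)
    by (simp add: vec_eq_iff forall_3 matrix_vector_mult_def sum_3 w_def a_def b_def c_def d_def f1_def f2_def g_def)
  moreover have "w \<noteq> 0" using D by (auto simp: vec_eq_iff forall_3 w_def D_def a_def b_def c_def d_def g_def)
  ultimately show ?thesis by (auto simp: g_def)
qed

lemma dominant_eigenvalue_2x2:
  fixes M :: "real^2^2"
  assumes pos12: "0 < M$1$2" and pos21: "0 < M$2$1" and trace: "0 < M$1$1 + M$2$2"
  shows "\<exists>r>0. dominant_eigenvalue M r"
proof -
  define a b c d where "a = M$1$1" and "b = M$1$2" and "c = M$2$1" and "d = M$2$2"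
  define q where "q = sqrt ((a - d)\<^sup>2 + 4 * b * c)"
  define r r' where "r = (a + d + q) / 2" and "r' = (a + d - q) / 2"
  have disc: "0 < (a - d)\<^sup>2 + 4 * b * c" using pos12 pos21 by (simp add: b_def c_def add_nonneg_pos)
  then have "0 < q" by (simp add: q_def)
  then have r: "0 < r" "\<bar>r'\<bar> < r" using trace by (auto simp: r_def r'_def a_def d_def)
  have "(r - a) * (r - d) - b * c = 0"
    using char_poly_2x2_real_root[OF less_imp_le[OF disc], of r] by (simp add: r_def q_def)
  then have "\<exists>w. w \<noteq> 0 \<and> M *v w = r *s w"
    using pos12 by (intro eigenvector_2x2) (simp_all add: a_def b_def c_def d_def)
  moreover have "cmod l < \<bar>r\<bar>" if ev: "complex_eigenvalue M l" and ne: "l \<noteq> complex_of_real r" for l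
  proof -
    obtain w where "w \<noteq> 0" "complexify M *v w = l *s w" using ev by (meson complex_eigenvalue_iff)
    from eigenvalue_2x2[OF this(2,1)]
    have "l = complex_of_real r \<or> l = complex_of_real r'"
      using char_poly_2x2_roots[OF less_imp_le[OF disc]] by (simp add: a_def b_def c_def d_def r_def r'_def q_def)
    then show ?thesis using ne r by (auto simp: norm_of_real)
  qed
  ultimately show ?thesis using r(1) by (auto simp: dominant_eigenvalue_def)
qed

lemma dominant_eigenvalue_3x3_block:
  fixes M :: "real^3^3"
  assumes zero31: "M$3$1 = 0" and zero32: "M$3$2 = 0" and disc: "0 \<le> M$1$2 * M$2$1"
    and dominant: "\<bar>M$1$1 + M$2$2\<bar> + sqrt ((M$1$1 - M$2$2)\<^sup>2 + 4 * M$1$2 * M$2$1) < 2 * M$3$3"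
  shows "\<exists>r>0. dominant_eigenvalue M r"
proof -
  define a b c d g where "a = M$1$1" and "b = M$1$2" and "c = M$2$1" and "d = M$2$2" and "g = M$3$3"
  define q where "q = sqrt ((a - d)\<^sup>2 + 4 * b * c)"
  have "0 \<le> 4 * b * c" using disc by (simp add: b_def c_def mult.assoc)
  then have disc': "0 \<le> (a - d)\<^sup>2 + 4 * b * c" by (rule add_nonneg_nonneg[OF zero_le_power2])
  have q: "0 \<le> q" using disc' by (simp add: q_def)
  have "\<bar>a + d\<bar> + q < 2 * g" using dominant by (simp add: a_def b_def c_def d_def g_def q_def)
  then have roots: "\<bar>(a + d + q) / 2\<bar> < g" "\<bar>(a + d - q) / 2\<bar> < g"
    using q by (simp_all add: abs_less_iff, linarith+)
  then have g: "0 < g" by linarith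
  have "(g - a) * (g - d) - b * c = (g - (a + d + q) / 2) * (g - (a + d - q) / 2)"
    using char_poly_2x2_real_root[OF disc', of g] by (simp add: q_def)
  then have "(g - a) * (g - d) - b * c \<noteq> 0" using roots by auto
  then have "\<exists>w. w \<noteq> 0 \<and> M *v w = g *s w"
    using zero31 zero32 eigenvector_3x3_block[of M] by (simp add: a_def b_def c_def d_def g_def)
  moreover have "cmod l < \<bar>g\<bar>" if ev: "complex_eigenvalue M l" and ne: "l \<noteq> complex_of_real g" for l
  proof -
    obtain w where "w \<noteq> 0" "complexify M *v w = l *s w" using ev by (meson complex_eigenvalue_iff)
    from eigenvalue_3x3_block[OF _ _ this(2,1)] zero31 zero32 ne
    have "(l - of_real a) * (l - of_real d) = of_real b * of_real c"
      by (simp add: a_def b_def c_def d_def g_def)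
    then have "l = complex_of_real ((a + d + q) / 2) \<or> l = complex_of_real ((a + d - q) / 2)"
      using char_poly_2x2_roots[OF disc'] by (simp add: q_def)
    then have "cmod l < g" using roots by (elim disjE) (simp_all only: norm_of_real)
    then show ?thesis using g by simp
  qed
  ultimately show ?thesis using g by (auto simp: dominant_eigenvalue_def g_def)
qed

lemma conjugate_square_eigenvector:
  fixes J0 J1 D :: "real^'n^'n"
  assumes J1: "J1 = D ** J0 ** D" and D: "D ** D = mat 1"
    and M: "\<exists>c>0. dominant_eigenvalue (D ** J0) c"
    and mu: "dominant_eigenvalue (J1 ** J0) \<mu>" "(J1 ** J0) *v v = \<mu> *s v" "v \<noteq> 0"
  shows "\<mu> > 0 \<and> J0 *v v = sqrt \<mu> *s (D *v v) \<and> J1 *v (D *v v) = sqrt \<mu> *s v"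
proof -
  obtain c where c: "0 < c" "dominant_eigenvalue (D ** J0) c" using M by blast
  have "J1 ** J0 = (D ** J0) ** (D ** J0)" by (simp add: J1 matrix_mul_assoc)
  with dominant_eigenvalue_square[OF c(2,1)] mu
  have mu_eq: "\<mu> = c\<^sup>2" and Mv: "(D ** J0) *v v = c *s v" by auto
  have sqrt_mu: "sqrt \<mu> = c" using c(1) by (simp add: mu_eq)
  have "J0 *v v = D *v ((D ** J0) *v v)"
    by (simp add: matrix_vector_mul_assoc matrix_mul_assoc D)
  also have "\<dots> = c *s (D *v v)" by (simp add: Mv vector_scalar_commute)
  finally have "J0 *v v = c *s (D *v v)" .
  moreover have "J1 *v (D *v v) = (D ** J0) *v v"
    by (simp add: J1 matrix_vector_mul_assoc flip: matrix_mul_assoc) (simp add: D)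
  ultimately show ?thesis using c(1) by (simp add: mu_eq sqrt_mu Mv)
qed

lemma has_derivative_rows:
  fixes F :: "real^'n \<Rightarrow> real^'m" and A :: "real^'n^'m"
  assumes "\<And>i. ((\<lambda>x. F x $ i) has_derivative (\<lambda>h. A $ i \<bullet> h)) (at P)"
  shows "(F has_derivative (\<lambda>h. A *v h)) (at P)"
proof -
  have "((\<lambda>x. F x \<bullet> b) has_derivative (\<lambda>h. (A *v h) \<bullet> b)) (at P)" if b: "b \<in> Basis" for b
  proof -
    obtain i where "b = axis i 1" using b by (auto simp: Basis_vec_def)
    then show ?thesis
      using assms[of i] by (simp add: inner_axis) (simp add: matrix_vector_mult_def inner_vec_def mult.commute)
  qed
  then show ?thesis using has_derivative_componentwise_within[of F _ P UNIV] by simp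
qed

lemma jacobian_eqI: "(F has_derivative (\<lambda>h. A *v h)) (at P) \<Longrightarrow> jacobian F P = A"
  by (metis frechet_derivative_at jacobian_def matrix_of_matrix_vector_mul)

lemma jacobian_matrix_sandwich:
  assumes "(F has_derivative (\<lambda>h. A *v h)) (at (E *v P))"
  shows "jacobian (\<lambda>x. Q *v F (E *v x)) P = Q ** A ** E"
proof -
  have "((\<lambda>x. Q *v F (E *v x)) has_derivative (\<lambda>h. Q *v (A *v (E *v h)))) (at P)"
    by (intro has_derivative_compose[of "\<lambda>x. E *v x", OF _ has_derivative_compose[OF assms]]
        bounded_linear_imp_has_derivative matrix_vector_mul_bounded_linear)
  then show ?thesis by (intro jacobian_eqI) (simp add: matrix_vector_mul_assoc matrix_mul_assoc)
qed

lemma power_bounds: "0 \<le> a \<Longrightarrow> a \<le> x \<Longrightarrow> x \<le> b \<Longrightarrow> a ^ n \<le> x ^ n \<and> x ^ n \<le> (b::real) ^ n"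
  by (auto intro: power_mono)

lemma fpoly_strict_antimono:
  fixes x y :: real
  assumes "0.63711 \<le> x" "x < y" "y \<le> 0.63712"
  shows "fpoly y < fpoly x"
proof -
  define fpoly' :: "real \<Rightarrow> real" where
    "fpoly' t = 7168*t^6 - 18432*t^5 + 16000*t^4 - 4608*t^3 - 432*t^2 + 352*t - 40" for t
  have deriv: "DERIV fpoly t :> fpoly' t" for t
    unfolding fpoly_def fpoly'_def by (rule derivative_eq_intros refl | simp)+
  have neg: "fpoly' t < 0" if t: "0.63711 \<le> t" "t \<le> 0.63712" for t
  proof -
    note bounds = power_bounds[OF _ t, of 6] power_bounds[OF _ t, of 5] power_bounds[OF _ t, of 4]
      power_bounds[OF _ t, of 3] power_bounds[OF _ t, of 2]
    have "fpoly' t \<le> 7168*0.63712^6 - 18432*0.63711^5 + 16000*0.63712^4 - 4608*0.63711^3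
        - 432*0.63711^2 + 352*0.63712 - 40"
      unfolding fpoly'_def using bounds t by linarith
    also have "\<dots> < 0" by (simp add: power_divide)
    finally show ?thesis .
  qed
  show ?thesis
  proof (rule DERIV_neg_imp_decreasing[OF assms(2)])
    fix t assume "x \<le> t" "t \<le> y"
    then show "\<exists>D. DERIV fpoly t :> D \<and> D < 0"
      using deriv neg[of t] assms by auto
  qed
qed

lemma p_star_bounds: "0.637116837818846 \<le> p_star \<and> p_star \<le> 0.637116837818848"
proof -
  have "\<exists>p. 0.637116837818846 \<le> p \<and> p \<le> 0.637116837818848 \<and> fpoly p = 0"
  proof (rule IVT2')
    show "fpoly 0.637116837818848 \<le> 0" "0 \<le> fpoly 0.637116837818846"
      by (simp_all add: fpoly_def power_divide)
    show "continuous_on {0.637116837818846..0.637116837818848} fpoly"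
      unfolding fpoly_def by (intro continuous_intros)
  qed simp
  moreover have "p = q" if "p \<in> {0.637116837818846..0.637116837818848}" "fpoly p = 0"
      "q \<in> {0.637116837818846..0.637116837818848}" "fpoly q = 0" for p q :: real
    using fpoly_strict_antimono[of p q] fpoly_strict_antimono[of q p] that
    by (cases p q rule: linorder_cases) auto
  ultimately have "\<exists>!p. p \<in> {0.637116837818846..0.637116837818848} \<and> fpoly p = 0"
    by auto
  from theI'[OF this] show ?thesis unfolding p_star_def by simp
qed

lemma d_star_enclosure: "\<bar>d_star - 0.257995382955952158\<bar> \<le> 0.0000000000025"
proof -
  have p: "0.637116837818846 \<le> p_star" "p_star \<le> 0.637116837818848" using p_star_bounds by auto
  note bounds = power_bounds[OF _ p, of 6] power_bounds[OF _ p, of 5] power_bounds[OF _ p, of 4]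
    power_bounds[OF _ p, of 3] power_bounds[OF _ p, of 2]
  have "512*0.637116837818846^6 - 1152*0.637116837818848^5 + 736*0.637116837818846^4
      - 24*0.637116837818848^3 - 88*0.637116837818848^2 + 19*0.637116837818846 - 9/2 \<le> d_star"
    unfolding d_star_def using bounds p by linarith
  moreover have "d_star \<le> 512*0.637116837818848^6 - 1152*0.637116837818846^5 + 736*0.637116837818848^4
      - 24*0.637116837818846^3 - 88*0.637116837818846^2 + 19*0.637116837818848 - 9/2"
    unfolding d_star_def using bounds p by linarith
  moreover have "0.257995382955952158 - 0.0000000000025 \<le> 512*0.637116837818846^6 - 1152*0.637116837818848^5
      + 736*0.637116837818846^4 - 24*0.637116837818848^3 - 88*0.637116837818848^2 + 19*0.637116837818846 - (9/2::real)"
    by (simp add: power_divide)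
  moreover have "512*0.637116837818848^6 - 1152*0.637116837818846^5 + 736*0.637116837818848^4
      - 24*0.637116837818846^3 - 88*0.637116837818846^2 + 19*0.637116837818848 - 9/2
      \<le> 0.257995382955952158 + (0.0000000000025::real)"
    by (simp add: power_divide)
  ultimately show ?thesis unfolding abs_le_iff by linarith
qed

section \<open>Gadget B\<close>

(* 1-based, like the sign matrices. *)
definition rows :: "'a list \<Rightarrow> nat \<Rightarrow> 'a" where
  "rows xs i = xs ! (i - 1)"

definition chart_gradient_B :: "nat \<Rightarrow> real^3" where
  "chart_gradient_B = rows [vector [1, 0, 0], vector [-1, 0, 0], vector [0, -1, -1], vector [0, 1, 0], vector [0, 0, 1]]"

(* Centres and radii were computed in floating point; only their validity is checked here.
   The radii of box_B0 come from the enclosures of p_* and d_*. *)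
definition box_B0 :: "3 box" where
  "box_B0 =
    ((rows [0.137116837818847, 0.362883162181153, 0.242004617044047842, 0.257995382955952158, 0],
      chart_gradient_B),
     (rows [0.000000000000001, 0.000000000000001, 0.0000000000025, 0.0000000000025, 0],
      (\<lambda>_. 0)))"

definition box_B1 :: "3 box" where
  "box_B1 =
    ((rows [0.107607294046931, 0.5, 0.1899216930701003, 0.2024710128829687, 0],
      rows [vector [0.6158881427406867, 0, 0],
            vector [0, 0, 0],
            vector [-0.2980955482518596, -0.7847854119061381, -0.7847854119061381],
            vector [-0.3177925944888272, 0.7847854119061381, 0],
            vector [0, 0, 0.7847854119061381]]),
     (rows [0.00000000000043, 0.0000000000035, 0.0000000000028, 0.0000000000028, 0],
      rows [vector [0.0000000000031, 0, 0],
            vector [0.0000000000097, 0, 0],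
            vector [0.0000000000056, 0.0000000000031, 0.0000000000031],
            vector [0.0000000000057, 0.0000000000031, 0],
            vector [0, 0, 0.0000000000031]]))"

definition box_B2 :: "3 box" where
  "box_B2 =
    ((rows [0.1808349752567206, 0.355886570997414, 0.3191650247432794, 0.144113429002586, 0],
      rows [vector [0.8418542940512346, 0.4769842828391698, 0.4769842828391698],
            vector [0.1610004038128794, -0.3975887746112578, -0.3975887746112578],
            vector [-0.8418542940512347, -0.4769842828391698, -0.4769842828391698],
            vector [-0.1610004038128795, 0.3975887746112578, -0.1610004038128795],
            vector [0, 0, 0.5585891784241373]]),
     (rows [0.0000000000037, 0.000000000005, 0.0000000000099, 0.000000000003, 0],
      rows [vector [0.00000000003, 0.00000000002, 0.00000000002],
            vector [0.000000000017, 0.0000000000099, 0.0000000000099],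
            vector [0.000000000047, 0.000000000043, 0.000000000043],
            vector [0.000000000009, 0.0000000000089, 0.0000000000051],
            vector [0, 0, 0.0000000000061]]))"

definition box_B3 :: "3 box" where
  "box_B3 =
    ((rows [0.2782518284232218, 0.2635995331637733, 0.2364004668362267, 0.2217481715767782, 0],
      rows [vector [0.7123540357287408, -0.0149544076597656, 0.4633629442540805],
            vector [0.3851157025127189, 0.0470225721355245, -0.1710997870915157],
            vector [-0.385115702512719, -0.0470225721355245, -0.2426383493328795],
            vector [-0.7123540357287409, 0.0149544076597656, -0.4633629442540805],
            vector [0, 0, 0.4137381364243952]]),
     (rows [0.000000000015, 0.000000000008, 0.000000000012, 0.000000000012, 0],
      rows [vector [0.00000000015, 0.00000000011, 0.000000000097],
            vector [0.000000000047, 0.000000000035, 0.000000000031],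
            vector [0.000000000072, 0.000000000063, 0.000000000057],
            vector [0.000000000098, 0.000000000075, 0.000000000064],
            vector [0, 0, 0.000000000012]]))"

definition box_B4 :: "3 box" where
  "box_B4 =
    ((rows [0.188926977204853, 0.5, 0.160510807286602, 0.150562215508545, 0],
      rows [vector [0.5824762241895969, 0.0019101408098263, 0.2707169747025466],
            vector [-0.0000000000000002, 0, 0],
            vector [-0.1775428246386119, -0.0216779534676028, -0.2020402570605016],
            vector [-0.4049333995509851, 0.0197678126577766, -0.3495959695009722],
            vector [0, 0, 0.2809192518589273]]),
     (rows [0.000000000017, 0.00000000006, 0.000000000014, 0.000000000013, 0],
      rows [vector [0.00000000018, 0.00000000012, 0.00000000012],
            vector [0.00000000053, 0.00000000035, 0.00000000035],
            vector [0.00000000011, 0.000000000076, 0.000000000077],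
            vector [0.00000000013, 0.000000000082, 0.000000000085],
            vector [0, 0, 0.000000000018]]))"

definition box_B5 :: "3 box" where
  "box_B5 =
    ((rows [0.1371168378188472, 0.3628831621811528, 0.2579953829559567, 0.2420046170440433, 0],
      rows [vector [0.3068116376961208, 0.001006141376686, 0.1425965814762454],
            vector [-0.3068116376961209, -0.001006141376686, -0.1425965814762453],
            vector [0.1977180909182598, -0.0332596158005119, -0.1002221236964032],
            vector [-0.19771809091826, 0.033259615800512, -0.3513105250282066],
            vector [0, 0, 0.4515326487246098]]),
     (rows [0.000000000023, 0.000000000072, 0.000000000066, 0.000000000062, 0],
      rows [vector [0.00000000027, 0.00000000015, 0.00000000018],
            vector [0.00000000072, 0.00000000043, 0.00000000047],
            vector [0.00000000073, 0.00000000039, 0.00000000047],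
            vector [0.00000000073, 0.00000000039, 0.00000000051],
            vector [0, 0, 0.00000000011]]))"

definition certificate_B :: "3 box list" where
  "certificate_B = [box_B0, box_B1, box_B2, box_B3, box_B4, box_B5]"

lemma atLeastAtMost_1_5: "{1..5::nat} = {1, 2, 3, 4, 5}" by auto

lemma run_certified_B: "run_certified LB 5 [1, 3, 4, 1, 2] certificate_B"
  by (simp add: certificate_B_def box_B0_def box_B1_def box_B2_def box_B3_def box_B4_def box_B5_def
      chart_gradient_B_def atLeastAtMost_1_5 forall_3 rows_def LB_def quotient_certified_def Let_def
      del: One_nat_def)

definition tangent_B :: "(nat \<Rightarrow> real) \<times> (nat \<Rightarrow> real^3)" where
  "tangent_B = tangent_run LB 5 [1, 3, 4, 1, 2] (chartB P0B, chart_gradient_B)"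

lemma has_derivative_chartB:
  assumes "i \<in> {1..5}"
  shows "((\<lambda>x. chartB x i) has_derivative (\<lambda>h. chart_gradient_B i \<bullet> h)) (at P)"
proof -
  have affine: "(\<lambda>x. chartB x i) = (\<lambda>x. chartB 0 i + chart_gradient_B i \<bullet> x)"
    using assms unfolding atLeastAtMost_1_5
    by (elim insertE emptyE) (simp_all add: fun_eq_iff chartB_def chart_gradient_B_def rows_def inner_vec_def sum_3)
  show ?thesis unfolding affine by (auto intro!: derivative_eq_intros)
qed

lemma enclosed_tangent_B:
  "nonsingular_run LB 5 [1, 3, 4, 1, 2] (chartB P0B) \<and> enclosed 5 tangent_B (last certificate_B)"
proof -
  have p: "\<bar>p_star - 0.637116837818847\<bar> \<le> 0.000000000000001" using p_star_bounds unfolding abs_le_iff by linarith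
  have init: "enclosed 5 (chartB P0B, chart_gradient_B) box_B0"
    using p d_star_enclosure unfolding atLeastAtMost_1_5
    by (simp add: box_B0_def chartB_def P0B_def rows_def abs_minus_commute)
  from enclosed_tangent_run[OF init, of LB "[1, 3, 4, 1, 2]" "[box_B1, box_B2, box_B3, box_B4, box_B5]"]
  show ?thesis using run_certified_B by (simp add: tangent_B_def certificate_B_def)
qed

lemma has_derivative_run_B:
  assumes "i \<in> {1..5}"
  shows "((\<lambda>x. ada_run LB 5 [1, 3, 4, 1, 2] (chartB x) i) has_derivative (\<lambda>h. snd tangent_B i \<bullet> h)) (at P0B)"
  using has_derivative_ada_run[of 5 chartB chart_gradient_B P0B LB "[1, 3, 4, 1, 2]"]
    has_derivative_chartB enclosed_tangent_B assms
  by (simp add: tangent_B_def)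

lemma has_derivative_F0B: "(F0B has_derivative (\<lambda>h. J0B *v h)) (at P0B)"
  and J0B_rows: "J0B = vector [- snd tangent_B 2, snd tangent_B 4, snd tangent_B 5]"
proof -
  have deriv: "(F0B has_derivative (\<lambda>h. vector [- snd tangent_B 2, snd tangent_B 4, snd tangent_B 5] *v h)) (at P0B)"
  proof (rule has_derivative_rows)
    fix i :: 3
    show "((\<lambda>x. F0B x $ i) has_derivative (\<lambda>h. vector [- snd tangent_B 2, snd tangent_B 4, snd tangent_B 5] $ i \<bullet> h)) (at P0B)"
      using has_derivative_run_B[of 2] has_derivative_run_B[of 4] has_derivative_run_B[of 5] exhaust_3[of i]
      by (auto simp: F0B_def unchartB_def intro!: derivative_eq_intros)
  qed
  show J0B: "J0B = vector [- snd tangent_B 2, snd tangent_B 4, snd tangent_B 5]"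
    unfolding J0B_def using deriv by (rule jacobian_eqI)
  from deriv show "(F0B has_derivative (\<lambda>h. J0B *v h)) (at P0B)" by (simp only: J0B)
qed

definition phase_swap_B :: "real^3 \<Rightarrow> real^3" where
  "phase_swap_B x = vector [0, 1/2, 0] + DSB *v x"

lemma phase_swap_B_P1B: "phase_swap_B P1B = P0B"
  by (simp add: phase_swap_B_def P1B_def P0B_def DSB_def vec_eq_iff forall_3 matrix_vector_mult_def sum_3)

lemma F1B_phase_swap:
  "F1B x = vector [1 - ada_run LB 5 [1, 3, 4, 1, 2] (chartB (phase_swap_B x)) 2,
                   ada_run LB 5 [1, 3, 4, 1, 2] (chartB (phase_swap_B x)) 3,
                   ada_run LB 5 [1, 3, 4, 1, 2] (chartB (phase_swap_B x)) 5]"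
proof -
  define \<sigma> :: "nat \<Rightarrow> nat" where "\<sigma> = id(3 := 4, 4 := 3)"
  have "bij_betw \<sigma> {1..5} {1..5}"
    by (auto simp: bij_betw_def inj_on_def \<sigma>_def atLeastAtMost_1_5)
  moreover have "\<forall>j\<in>set [1, 4, 3, 1, 2]. \<forall>i\<in>{1..5}. LB (\<sigma> i) (\<sigma> j) = LB i j"
    unfolding atLeastAtMost_1_5 by (simp add: \<sigma>_def LB_def)
  moreover have "\<forall>i\<in>{1..5}. chartB x i = chartB (phase_swap_B x) (\<sigma> i)"
    by (simp add: \<sigma>_def atLeastAtMost_1_5 chartB_def phase_swap_B_def DSB_def matrix_vector_mult_def sum_3)
  ultimately have "\<forall>i\<in>{1..5}. ada_run LB 5 [1, 4, 3, 1, 2] (chartB x) i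
      = ada_run LB 5 [1, 3, 4, 1, 2] (chartB (phase_swap_B x)) (\<sigma> i)"
    using ada_run_relabel[of \<sigma> 5 "[1, 4, 3, 1, 2]" LB \<sigma>] by (simp add: \<sigma>_def)
  then show ?thesis by (simp add: F1B_def unchartB_def \<sigma>_def atLeastAtMost_1_5)
qed

lemma has_derivative_F1B: "(F1B has_derivative (\<lambda>h. J1B *v h)) (at P1B)"
  and J1B_rows: "J1B = vector [- snd tangent_B 2, snd tangent_B 3, snd tangent_B 5] ** DSB"
proof -
  define R :: "real^3^3" where "R = vector [- snd tangent_B 2, snd tangent_B 3, snd tangent_B 5]"
  define G :: "real^3 \<Rightarrow> real^3" where "G y = vector [1 - ada_run LB 5 [1, 3, 4, 1, 2] (chartB y) 2,
      ada_run LB 5 [1, 3, 4, 1, 2] (chartB y) 3, ada_run LB 5 [1, 3, 4, 1, 2] (chartB y) 5]" for y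
  have "(G has_derivative (\<lambda>h. R *v h)) (at (phase_swap_B P1B))"
    unfolding phase_swap_B_P1B
  proof (rule has_derivative_rows)
    fix i :: 3
    show "((\<lambda>x. G x $ i) has_derivative (\<lambda>h. R $ i \<bullet> h)) (at P0B)"
      using has_derivative_run_B[of 2] has_derivative_run_B[of 3] has_derivative_run_B[of 5] exhaust_3[of i]
      by (auto simp: G_def R_def intro!: derivative_eq_intros)
  qed
  moreover have "(phase_swap_B has_derivative (\<lambda>h. DSB *v h)) (at P1B)"
    unfolding phase_swap_B_def[abs_def]
    by (auto intro!: derivative_eq_intros bounded_linear_imp_has_derivative)
  ultimately have "((G \<circ> phase_swap_B) has_derivative (\<lambda>h. (R ** DSB) *v h)) (at P1B)"
    using has_derivative_compose by (fastforce simp: matrix_vector_mul_assoc comp_def)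
  moreover have "G \<circ> phase_swap_B = F1B" by (simp add: fun_eq_iff G_def F1B_phase_swap)
  ultimately have deriv: "(F1B has_derivative (\<lambda>h. (R ** DSB) *v h)) (at P1B)" by simp
  show J1B: "J1B = vector [- snd tangent_B 2, snd tangent_B 3, snd tangent_B 5] ** DSB"
    unfolding J1B_def R_def[symmetric] using deriv by (rule jacobian_eqI)
  from deriv show "(F1B has_derivative (\<lambda>h. J1B *v h)) (at P1B)" by (simp only: J1B R_def)
qed

lemma sign_columns_LB: "sign_column LB 5 j" if "j \<in> {1, 2, 3, 4}"
  using that by (elim insertE emptyE) (simp_all add: sign_column_def atLeastAtMost_1_5 LB_def del: One_nat_def)

lemma last_update_balance_B: "snd tangent_B 3 = - snd tangent_B 4 - snd tangent_B 5"
proof -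
  have "{i\<in>{1..5}. LB i 2 = -1} = {3, 4, 5}" unfolding atLeastAtMost_1_5 by (auto simp: LB_def)
  moreover have "sum (chartB P0B) {1..5} = 1" "sum chart_gradient_B {1..5} = 0"
    unfolding atLeastAtMost_1_5 by (simp_all add: chartB_def P0B_def chart_gradient_B_def rows_def vec_eq_iff forall_3)
  ultimately have "snd tangent_B 3 + snd tangent_B 4 + snd tangent_B 5 = 0"
    using tangent_run_last_column_sum[of "[1, 3, 4, 1]" 2 LB 5 "chartB P0B" chart_gradient_B]
      sign_columns_LB enclosed_tangent_B
    by (simp add: tangent_B_def add.assoc)
  then show ?thesis by (simp add: algebra_simps eq_neg_iff_add_eq_0)
qed

lemma DSB_involution: "DSB ** DSB = mat 1"
  by (simp add: vec_eq_iff forall_3 matrix_matrix_mult_def sum_3 DSB_def mat_def)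

lemma J1B_conjugate: "J1B = DSB ** J0B ** DSB"
  by (simp add: J1B_rows J0B_rows last_update_balance_B vec_eq_iff forall_3 matrix_matrix_mult_def sum_3 DSB_def)

lemma swapped_jacobian_B_bounds:
  defines "M \<equiv> DSB ** J0B"
  shows "M$3$1 = 0" "M$3$2 = 0"
    and "0.306 \<le> M$1$1" "M$1$1 \<le> 0.307" "0.0009 \<le> M$1$2" "M$1$2 \<le> 0.0011"
    and "0.197 \<le> M$2$1" "M$2$1 \<le> 0.198" "-0.034 \<le> M$2$2" "M$2$2 \<le> -0.033"
    and "0.451 \<le> M$3$3" "M$3$3 \<le> 0.452"
proof -
  obtain u G where tangent: "tangent_B = (u, G)" by fastforce
  obtain cu cg ru rg where box: "box_B5 = ((cu, cg), (ru, rg))" by (metis prod.collapse)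
  have "\<forall>i\<in>{1..5}. \<forall>k. \<bar>G i $ k - cg i $ k\<bar> \<le> rg i $ k"
    using enclosed_tangent_B by (simp add: tangent box certificate_B_def)
  moreover have "cg = snd (fst box_B5)" "rg = snd (snd box_B5)" by (simp_all add: box)
  ultimately have encl: "\<bar>G i $ k - snd (fst box_B5) i $ k\<bar> \<le> snd (snd box_B5) i $ k"
    if "i \<in> {1..5}" for i k
    using that by blast
  have "\<bar>G 2 $ 1 + 0.3068116376961209\<bar> \<le> 0.00000000072" "\<bar>G 2 $ 2 + 0.001006141376686\<bar> \<le> 0.00000000043"
    "\<bar>G 4 $ 1 + 0.19771809091826\<bar> \<le> 0.00000000073" "\<bar>G 4 $ 2 - 0.033259615800512\<bar> \<le> 0.00000000039"
    "G 5 $ 1 = 0" "G 5 $ 2 = 0" "\<bar>G 5 $ 3 - 0.4515326487246098\<bar> \<le> 0.00000000011"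
    using encl[of 2 1] encl[of 2 2] encl[of 4 1] encl[of 4 2] encl[of 5 1] encl[of 5 2] encl[of 5 3]
    by (simp_all add: box_B5_def rows_def)
  moreover have "M = vector [- G 2, - G 4 - G 5, G 5]"
    by (simp add: M_def J0B_rows tangent vec_eq_iff forall_3 matrix_matrix_mult_def sum_3 DSB_def)
  ultimately show "M$3$1 = 0" "M$3$2 = 0"
    "0.306 \<le> M$1$1" "M$1$1 \<le> 0.307" "0.0009 \<le> M$1$2" "M$1$2 \<le> 0.0011"
    "0.197 \<le> M$2$1" "M$2$1 \<le> 0.198" "-0.034 \<le> M$2$2" "M$2$2 \<le> -0.033"
    "0.451 \<le> M$3$3" "M$3$3 \<le> 0.452"
    unfolding abs_le_iff by simp_all
qed

lemma dominant_eigenvalue_B: "\<exists>c>0. dominant_eigenvalue (DSB ** J0B) c"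
proof -
  define M where "M = DSB ** J0B"
  note bounds = swapped_jacobian_B_bounds[folded M_def]
  have "(M$1$1 - M$2$2)\<^sup>2 \<le> 0.341\<^sup>2" using bounds by (intro power_mono) auto
  moreover have "4 * M$1$2 * M$2$1 \<le> 4 * 0.0011 * 0.198"
    using bounds by (simp only: mult.assoc) (intro mult_left_mono mult_mono; simp)
  ultimately have "(M$1$1 - M$2$2)\<^sup>2 + 4 * M$1$2 * M$2$1 < 0.1296" by (simp add: power2_eq_square)
  moreover have "sqrt 0.1296 = (0.36::real)" by (rule real_sqrt_unique) (simp_all add: power2_eq_square)
  ultimately have "sqrt ((M$1$1 - M$2$2)\<^sup>2 + 4 * M$1$2 * M$2$1) < 0.36"
    by (metis real_sqrt_less_iff)
  then have "\<bar>M$1$1 + M$2$2\<bar> + sqrt ((M$1$1 - M$2$2)\<^sup>2 + 4 * M$1$2 * M$2$1) < 2 * M$3$3"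
    using bounds by (simp add: abs_le_iff)
  moreover have "0 \<le> M$1$2 * M$2$1" using bounds by simp
  ultimately show ?thesis
    using dominant_eigenvalue_3x3_block[of M] bounds by (simp add: M_def)
qed

section \<open>Gadget A as the slice e = 0 of gadget B\<close>

definition embed_pd :: "real^2^3" where
  "embed_pd = vector [vector [1, 0], vector [0, 1], vector [0, 0]]"

definition proj_pd :: "real^3^2" where
  "proj_pd = vector [vector [1, 0, 0], vector [0, 1, 0]]"

lemma atLeastAtMost_1_4: "{1..4::nat} = {1, 2, 3, 4}" by auto

lemma run_slice_A:
  "unchartA (ada_run LA 4 cs (chartA x)) = proj_pd *v unchartB (ada_run LB 5 cs (chartB (embed_pd *v x)))"
proof -
  have "LB i j = LA i j" if "i \<in> {1..4}" for i j :: nat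
    using that unfolding atLeastAtMost_1_4 by (elim insertE emptyE) (simp_all add: LA_def LB_def)
  moreover have "\<forall>i\<in>{1..4}. chartB (embed_pd *v x) i = chartA x i" "chartB (embed_pd *v x) (Suc 4) = 0"
    by (auto simp: chartA_def chartB_def embed_pd_def matrix_vector_mult_def sum_2)
  ultimately have "\<forall>i\<in>{1..4}. ada_run LB (Suc 4) cs (chartB (embed_pd *v x)) i = ada_run LA 4 cs (chartA x) i"
    using ada_run_zero_row[of cs 4 LB LA] by blast
  then show ?thesis
    by (simp add: unchartA_def unchartB_def proj_pd_def vec_eq_iff forall_2 matrix_vector_mult_def sum_3)
qed

lemma J0A_slice: "J0A = proj_pd ** J0B ** embed_pd"
proof -
  have "F0A = (\<lambda>x. proj_pd *v F0B (embed_pd *v x))"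
    by (simp add: fun_eq_iff F0A_def F0B_def run_slice_A)
  moreover have "P0B = embed_pd *v P0A"
    by (simp add: P0A_def P0B_def embed_pd_def vec_eq_iff forall_3 matrix_vector_mult_def sum_2)
  ultimately show ?thesis
    using jacobian_matrix_sandwich[of F0B J0B embed_pd P0A proj_pd] has_derivative_F0B by (simp add: J0A_def)
qed

lemma J1A_slice: "J1A = proj_pd ** J1B ** embed_pd"
proof -
  have "F1A = (\<lambda>x. proj_pd *v F1B (embed_pd *v x))"
    by (simp add: fun_eq_iff F1A_def F1B_def run_slice_A)
  moreover have "P1B = embed_pd *v P1A"
    by (simp add: P1A_def P1B_def embed_pd_def vec_eq_iff forall_3 matrix_vector_mult_def sum_2)
  ultimately show ?thesis
    using jacobian_matrix_sandwich[of F1B J1B embed_pd P1A proj_pd] has_derivative_F1B by (simp add: J1A_def)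
qed

lemma J0B_row3: "J0B$3$1 = 0" "J0B$3$2 = 0"
  using swapped_jacobian_B_bounds(1,2) by (simp_all add: matrix_matrix_mult_def sum_3 DSB_def)

lemma J1A_conjugate: "J1A = DSA ** J0A ** DSA"
  by (simp add: J1A_slice J0A_slice J1B_conjugate J0B_row3 vec_eq_iff forall_2 forall_3
      matrix_matrix_mult_def sum_2 sum_3 DSA_def DSB_def proj_pd_def embed_pd_def)

lemma DSA_involution: "DSA ** DSA = mat 1"
  by (simp add: vec_eq_iff forall_2 matrix_matrix_mult_def sum_2 DSA_def mat_def)

lemma dominant_eigenvalue_A: "\<exists>c>0. dominant_eigenvalue (DSA ** J0A) c"
proof (rule dominant_eigenvalue_2x2)
  have "(DSA ** J0A)$1$1 = (DSB ** J0B)$1$1" "(DSA ** J0A)$1$2 = (DSB ** J0B)$1$2"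
    "(DSA ** J0A)$2$1 = (DSB ** J0B)$2$1" "(DSA ** J0A)$2$2 = (DSB ** J0B)$2$2"
    using J0B_row3 by (simp_all add: J0A_slice matrix_matrix_mult_def sum_2 sum_3 DSA_def DSB_def proj_pd_def embed_pd_def)
  then show "0 < (DSA ** J0A)$1$2" "0 < (DSA ** J0A)$2$1" "0 < (DSA ** J0A)$1$1 + (DSA ** J0A)$2$2"
    using swapped_jacobian_B_bounds by auto
qed

theorem lemma4:
  shows "(\<forall>mu (v0 :: real^2).
            dominant_eigenvalue (J1A ** J0A) mu \<and> (J1A ** J0A) *v v0 = mu *s v0 \<and> v0$1 = 1 \<longrightarrow>
            mu > 0 \<and> J0A *v v0 = sqrt mu *s (DSA *v v0) \<and> J1A *v (DSA *v v0) = sqrt mu *s v0)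
       \<and> (\<forall>mu (v0 :: real^3).
            dominant_eigenvalue (J1B ** J0B) mu \<and> (J1B ** J0B) *v v0 = mu *s v0 \<and> v0$1 = 1 \<longrightarrow>
            mu > 0 \<and> J0B *v v0 = sqrt mu *s (DSB *v v0) \<and> J1B *v (DSB *v v0) = sqrt mu *s v0)"
proof (rule conjI; intro allI impI; elim conjE)
  fix mu and v0 :: "real^2"
  assume "dominant_eigenvalue (J1A ** J0A) mu" "(J1A ** J0A) *v v0 = mu *s v0" "v0$1 = 1"
  moreover from \<open>v0$1 = 1\<close> have "v0 \<noteq> 0" by auto
  ultimately show "mu > 0 \<and> J0A *v v0 = sqrt mu *s (DSA *v v0) \<and> J1A *v (DSA *v v0) = sqrt mu *s v0"
    using conjugate_square_eigenvector[OF J1A_conjugate DSA_involution dominant_eigenvalue_A] by blast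
next
  fix mu and v0 :: "real^3"
  assume "dominant_eigenvalue (J1B ** J0B) mu" "(J1B ** J0B) *v v0 = mu *s v0" "v0$1 = 1"
  moreover from \<open>v0$1 = 1\<close> have "v0 \<noteq> 0" by auto
  ultimately show "mu > 0 \<and> J0B *v v0 = sqrt mu *s (DSB *v v0) \<and> J1B *v (DSB *v v0) = sqrt mu *s v0"
    using conjugate_square_eigenvector[OF J1B_conjugate DSB_involution dominant_eigenvalue_B] by blast
qed

end
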